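(* Let $B$ be a finite skew brace and $x\in B$. Define $B_0:=\{0,x\}$ and, for $n\ge 1$, $B_n:=\{a\circ b: a,b\in B_{n-1}\}\cup\{\lambda_a(b): a,b\in B_{n-1}\}$. Then $B(x)=\bigcup_n B_n$.
   Context: A skew brace is a triple $(B,+,\circ)$ where $(B,+)$ and $(B,\circ)$ are groups and $a\circ(b+c)=a\circ b-a+a\circ c$ for all $a,b,c$; $0$ is the common identity of both groups. $\lambda_a(b):=-a+a\circ b$. $B(x)$ denotes the smallest subset of $B$ containing $x$ that is a subgroup of both $(B,+)$ and $(B,\circ)$. *)

theory Defs
  imports "HOL-Algebra.Group"
begin

text \<open>A skew brace on a common carrier: A is the additive group (B,+), written
  with the HOL-Algebra multiplicative notation, and M is the group (B,\<circ>).\<close>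
definition skew_brace :: "('a, 'b) monoid_scheme \<Rightarrow> ('a, 'c) monoid_scheme \<Rightarrow> bool" where
  "skew_brace A M \<longleftrightarrow> group A \<and> group M \<and> carrier A = carrier M \<and> \<one>\<^bsub>A\<^esub> = \<one>\<^bsub>M\<^esub> \<and>
     (\<forall>a\<in>carrier A. \<forall>b\<in>carrier A. \<forall>c\<in>carrier A.
        a \<otimes>\<^bsub>M\<^esub> (b \<otimes>\<^bsub>A\<^esub> c) = (a \<otimes>\<^bsub>M\<^esub> b) \<otimes>\<^bsub>A\<^esub> inv\<^bsub>A\<^esub> a \<otimes>\<^bsub>A\<^esub> (a \<otimes>\<^bsub>M\<^esub> c))"

definition brace_lambda :: "('a, 'b) monoid_scheme \<Rightarrow> ('a, 'c) monoid_scheme \<Rightarrow> 'a \<Rightarrow> 'a \<Rightarrow> 'a" where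
  "brace_lambda A M a b = inv\<^bsub>A\<^esub> a \<otimes>\<^bsub>A\<^esub> (a \<otimes>\<^bsub>M\<^esub> b)"

definition brace_gen :: "('a, 'b) monoid_scheme \<Rightarrow> ('a, 'c) monoid_scheme \<Rightarrow> 'a \<Rightarrow> 'a set" where
  "brace_gen A M x = \<Inter>{H. x \<in> H \<and> subgroup H A \<and> subgroup H M}"

fun brace_seq :: "('a, 'b) monoid_scheme \<Rightarrow> ('a, 'c) monoid_scheme \<Rightarrow> 'a \<Rightarrow> nat \<Rightarrow> 'a set" where
  "brace_seq A M x 0 = {\<one>\<^bsub>A\<^esub>, x}"
| "brace_seq A M x (Suc n) =
     {a \<otimes>\<^bsub>M\<^esub> b | a b. a \<in> brace_seq A M x n \<and> b \<in> brace_seq A M x n}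
     \<union> {brace_lambda A M a b | a b. a \<in> brace_seq A M x n \<and> b \<in> brace_seq A M x n}"

end

theory Submission
  imports Defs
begin

text \<open>Let U be the union of the sets B_n. It contains 0 and x and is closed under \<circ> and
  under every lambda_a, so it is contained in B(x). Conversely, U is finite, and in a finite
  group a nonempty subset closed under the product is a subgroup; hence U is a subgroup of
  (B,\<circ>). For a in U the map lambda_a is injective, so it permutes the finite set U; writing
  b in U as lambda_a(c) with c in U gives a + b = a \<circ> c in U, so U is also a subgroup of
  (B,+), whence B(x) \<subseteq> U.\<close>

lemma (in group) finite_mult_closed_subgroup:
  assumes fin: "finite H" and sub: "H \<subseteq> carrier G" and ne: "H \<noteq> {}"
    and closed: "\<And>a b. a \<in> H \<Longrightarrow> b \<in> H \<Longrightarrow> a \<otimes> b \<in> H"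
  shows "subgroup H G"
proof -
  have onto: "(\<lambda>b. a \<otimes> b) ` H = H" if a: "a \<in> H" for a
  proof (rule endo_inj_surj)
    show "inj_on (\<lambda>b. a \<otimes> b) H"
      using a sub by (intro inj_onI) (metis Units_eq Units_l_cancel subsetD)
  qed (use fin closed a in auto)
  obtain a where a: "a \<in> H" using ne by blast
  then have a_carrier: "a \<in> carrier G" using sub by blast
  obtain c where "c \<in> H" "a = a \<otimes> c" using onto[OF a] a by (metis imageE)
  then have one_in: "\<one> \<in> H" using a_carrier sub by auto
  have "inv b \<in> H" if b: "b \<in> H" for b
  proof -
    obtain d where d: "d \<in> H" "\<one> = b \<otimes> d" using onto[OF b] one_in by (metis imageE)
    then have "inv b = d" using b sub by (metis inv_equality inv_comm subsetD)
    with d show ?thesis by simp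
  qed
  then show ?thesis by (intro subgroupI) (use sub ne closed in auto)
qed

locale bigroup = A: group A + M: group M
  for A :: "('a, 'b) monoid_scheme" and M :: "('a, 'c) monoid_scheme" +
  assumes carrier_eq: "carrier M = carrier A"
    and one_eq: "\<one>\<^bsub>M\<^esub> = \<one>\<^bsub>A\<^esub>"

lemma skew_brace_bigroup: "skew_brace A M \<Longrightarrow> bigroup A M"
  by (auto simp: skew_brace_def bigroup_def bigroup_axioms_def)

context bigroup
begin

lemma M_mult_closed [intro, simp]:
  "a \<in> carrier A \<Longrightarrow> b \<in> carrier A \<Longrightarrow> a \<otimes>\<^bsub>M\<^esub> b \<in> carrier A"
  using carrier_eq M.m_closed by blast

lemma brace_lambda_closed [intro, simp]:
  "a \<in> carrier A \<Longrightarrow> b \<in> carrier A \<Longrightarrow> brace_lambda A M a b \<in> carrier A"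
  by (simp add: brace_lambda_def)

lemma inj_on_brace_lambda:
  assumes "a \<in> carrier A"
  shows "inj_on (brace_lambda A M a) (carrier A)"
proof (rule inj_onI)
  fix c d assume cd: "c \<in> carrier A" "d \<in> carrier A" "brace_lambda A M a c = brace_lambda A M a d"
  then have "a \<otimes>\<^bsub>M\<^esub> c = a \<otimes>\<^bsub>M\<^esub> d"
    using assms by (simp add: brace_lambda_def)
  then show "c = d" using assms cd carrier_eq by simp
qed

lemma mult_brace_lambda:
  assumes "a \<in> carrier A" "c \<in> carrier A"
  shows "a \<otimes>\<^bsub>A\<^esub> brace_lambda A M a c = a \<otimes>\<^bsub>M\<^esub> c"
  using assms by (simp add: brace_lambda_def A.m_assoc[symmetric])

lemma finite_brace_closed_subgroups:
  assumes fin: "finite U" and sub: "U \<subseteq> carrier A" and ne: "U \<noteq> {}"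
    and M_closed: "\<And>a b. a \<in> U \<Longrightarrow> b \<in> U \<Longrightarrow> a \<otimes>\<^bsub>M\<^esub> b \<in> U"
    and lambda_closed: "\<And>a b. a \<in> U \<Longrightarrow> b \<in> U \<Longrightarrow> brace_lambda A M a b \<in> U"
  shows "subgroup U M" and "subgroup U A"
proof -
  show "subgroup U M"
    using fin sub ne M_closed carrier_eq by (intro M.finite_mult_closed_subgroup) auto
  have "a \<otimes>\<^bsub>A\<^esub> b \<in> U" if a: "a \<in> U" and b: "b \<in> U" for a b
  proof -
    have "brace_lambda A M a ` U = U"
    proof (rule endo_inj_surj)
      show "inj_on (brace_lambda A M a) U"
        using inj_on_brace_lambda a sub by (blast intro: inj_on_subset)
    qed (use fin lambda_closed a in auto)
    then obtain c where c: "c \<in> U" "b = brace_lambda A M a c" using b by (metis imageE)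
    then have "a \<otimes>\<^bsub>A\<^esub> b = a \<otimes>\<^bsub>M\<^esub> c" using a sub by (auto intro: mult_brace_lambda)
    with a c M_closed show ?thesis by simp
  qed
  then show "subgroup U A"
    using fin sub ne by (intro A.finite_mult_closed_subgroup) auto
qed

lemma brace_seq_subset_carrier:
  assumes "x \<in> carrier A"
  shows "brace_seq A M x n \<subseteq> carrier A"
  using assms by (induction n) auto

lemma one_in_brace_seq: "\<one>\<^bsub>A\<^esub> \<in> brace_seq A M x n"
proof (induction n)
  case (Suc n)
  then have "\<one>\<^bsub>A\<^esub> \<otimes>\<^bsub>M\<^esub> \<one>\<^bsub>A\<^esub> \<in> brace_seq A M x (Suc n)" by auto
  then show ?case by (metis M.l_one M.one_closed one_eq)
qed simp

lemma mono_brace_seq: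
  assumes "x \<in> carrier A"
  shows "mono (brace_seq A M x)"
proof (rule mono_iff_le_Suc[THEN iffD2], intro allI subsetI)
  fix n a assume a: "a \<in> brace_seq A M x n"
  then have "a \<otimes>\<^bsub>M\<^esub> \<one>\<^bsub>A\<^esub> \<in> brace_seq A M x (Suc n)" using one_in_brace_seq by auto
  moreover have "a \<in> carrier M" using a brace_seq_subset_carrier assms carrier_eq by blast
  ultimately show "a \<in> brace_seq A M x (Suc n)" using one_eq by (metis M.r_one)
qed

lemma Union_brace_seq_closed:
  assumes "x \<in> carrier A" and "a \<in> (\<Union>n. brace_seq A M x n)" "b \<in> (\<Union>n. brace_seq A M x n)"
  shows "a \<otimes>\<^bsub>M\<^esub> b \<in> (\<Union>n. brace_seq A M x n)"
    and "brace_lambda A M a b \<in> (\<Union>n. brace_seq A M x n)"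
proof -
  obtain m k where "a \<in> brace_seq A M x m" "b \<in> brace_seq A M x k" using assms by blast
  then have "a \<in> brace_seq A M x (max m k)" "b \<in> brace_seq A M x (max m k)"
    using mono_brace_seq[OF assms(1)] by (meson max.cobounded1 max.cobounded2 monoD subsetD)+
  then have "a \<otimes>\<^bsub>M\<^esub> b \<in> brace_seq A M x (Suc (max m k))"
    and "brace_lambda A M a b \<in> brace_seq A M x (Suc (max m k))" by auto
  then show "a \<otimes>\<^bsub>M\<^esub> b \<in> (\<Union>n. brace_seq A M x n)"
    and "brace_lambda A M a b \<in> (\<Union>n. brace_seq A M x n)" by blast+
qed

end

lemma brace_seq_subset_subgroup:
  assumes "x \<in> H" and HA: "subgroup H A" and HM: "subgroup H M"
  shows "brace_seq A M x n \<subseteq> H"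
proof (induction n)
  case 0
  show ?case using assms by (simp add: subgroup.one_closed)
next
  case (Suc n)
  have "brace_lambda A M a b \<in> H" if "a \<in> H" "b \<in> H" for a b
    using HA HM that by (simp add: brace_lambda_def subgroup.m_closed subgroup.m_inv_closed)
  moreover have "a \<otimes>\<^bsub>M\<^esub> b \<in> H" if "a \<in> H" "b \<in> H" for a b
    using HM that by (rule subgroup.m_closed)
  ultimately show ?case by (auto dest!: subsetD[OF Suc.IH])
qed

theorem mainTheorem17:
  fixes A :: "('a, 'b) monoid_scheme" and M :: "('a, 'c) monoid_scheme" and x :: 'a
  assumes "skew_brace A M" and "finite (carrier A)" and "x \<in> carrier A"
  shows "brace_gen A M x = (\<Union>n. brace_seq A M x n)"
proof -
  interpret bigroup A M using assms(1) by (rule skew_brace_bigroup)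
  define U where "U = (\<Union>n. brace_seq A M x n)"
  have sub: "U \<subseteq> carrier A" using brace_seq_subset_carrier assms(3) by (auto simp: U_def)
  have "x \<in> brace_seq A M x 0" by simp
  then have x_in: "x \<in> U" unfolding U_def by blast
  have M_closed: "\<And>a b. a \<in> U \<Longrightarrow> b \<in> U \<Longrightarrow> a \<otimes>\<^bsub>M\<^esub> b \<in> U"
    and lambda_closed: "\<And>a b. a \<in> U \<Longrightarrow> b \<in> U \<Longrightarrow> brace_lambda A M a b \<in> U"
    unfolding U_def by (fact Union_brace_seq_closed[OF assms(3)])+
  have fin: "finite U" using finite_subset[OF sub assms(2)] .
  have ne: "U \<noteq> {}" using x_in by blast
  note finite_brace_closed_subgroups[OF fin sub ne M_closed lambda_closed]
  then have "brace_gen A M x \<subseteq> U" using x_in by (auto simp: brace_gen_def)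
  moreover have "U \<subseteq> brace_gen A M x"
    unfolding U_def brace_gen_def
    by (intro UN_least Inter_greatest, rule brace_seq_subset_subgroup) auto
  ultimately show ?thesis by (simp add: U_def)
qed

end
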